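(* Let $k$ be a field of characteristic $2$ and $n$ a positive even integer. Then the symmetric bilinear form $\phi^{\mathrm{odd}}_n$ is identically zero, and the nondegenerate part of the symmetric bilinear form $\phi^{\mathrm{even}}_n$ is isomorphic to the orthogonal sum of $2^{s(n)-1}$ copies of $\langle 1 \rangle$.
   Context: $\langle \alpha_1,\dots,\alpha_m\rangle$ denotes the symmetric bilinear form $(x,y)\mapsto x^tAy$ on $k^m$ with $A$ diagonal with entries $\alpha_i$. Define $\phi^{\mathrm{odd}}_n := \bigoplus_{0 \le i < n/2,\ i \text{ odd}} \langle \binom{n}{i}\rangle$ and $\phi^{\mathrm{even}}_n := \bigoplus_{0 \le i < n/2,\ i \text{ even}} \langle \binom{n}{i}\rangle$, binomial coefficients viewed in $k$. The nondegenerate part of a symmetric bilinear form on $V$ is the induced nondegenerate form on $V$ modulo its radical. $s(n)$ is the number of 1's in the binary expansion of $n$. *)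

theory Defs
  imports Main
begin

text \<open>Vectors of k^m: functions nat => k vanishing from index m on.\<close>
definition kvec :: "nat \<Rightarrow> (nat \<Rightarrow> 'k::field) set" where
  "kvec m = {x. \<forall>i\<ge>m. x i = 0}"

definition diag_form :: "'k::field list \<Rightarrow> (nat \<Rightarrow> 'k) \<Rightarrow> (nat \<Rightarrow> 'k) \<Rightarrow> 'k" where
  "diag_form a x y = (\<Sum>i<length a. x i * (a ! i) * y i)"

fun bitcount :: "nat \<Rightarrow> nat" where
  "bitcount n = (if n = 0 then 0 else n mod 2 + bitcount (n div 2))"

text \<open>Coefficient lists of phi_odd n and phi_even n (indices 0 <= i < n/2, in increasing order).\<close>
definition phi_odd :: "nat \<Rightarrow> 'k::field list" where
  "phi_odd n = map (\<lambda>i. of_nat (n choose i)) (filter (\<lambda>i. odd i \<and> 2 * i < n) [0..<n])"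

definition phi_even :: "nat \<Rightarrow> 'k::field list" where
  "phi_even n = map (\<lambda>i. of_nat (n choose i)) (filter (\<lambda>i. even i \<and> 2 * i < n) [0..<n])"

definition radical :: "('v \<Rightarrow> 'v \<Rightarrow> 'k::field) \<Rightarrow> 'v set \<Rightarrow> 'v set" where
  "radical B V = {x \<in> V. \<forall>y\<in>V. B x y = 0}"

text \<open>The nondegenerate part (V / rad B, with induced form) of the form B on k^m is isomorphic
  to the form C on k^r: equivalently (universal property of the quotient), there is a
  k-linear surjection f : k^m -> k^r whose kernel is exactly the radical and which
  carries B to C.\<close>
definition nondeg_part_iso ::
  "nat \<Rightarrow> ((nat \<Rightarrow> 'k) \<Rightarrow> (nat \<Rightarrow> 'k) \<Rightarrow> 'k::field) \<Rightarrow> nat \<Rightarrow> ((nat \<Rightarrow> 'k) \<Rightarrow> (nat \<Rightarrow> 'k) \<Rightarrow> 'k) \<Rightarrow> bool"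
  where
  "nondeg_part_iso m B r C \<longleftrightarrow>
     (\<exists>f. (\<forall>x\<in>kvec m. f x \<in> kvec r)
        \<and> (\<forall>x\<in>kvec m. \<forall>y\<in>kvec m. f (\<lambda>i. x i + y i) = (\<lambda>i. f x i + f y i))
        \<and> (\<forall>c. \<forall>x\<in>kvec m. f (\<lambda>i. c * x i) = (\<lambda>i. c * f x i))
        \<and> f ` kvec m = kvec r
        \<and> {x \<in> kvec m. f x = (\<lambda>i. 0)} = radical B (kvec m)
        \<and> (\<forall>x\<in>kvec m. \<forall>y\<in>kvec m. B x y = C (f x) (f y)))"

end

theory Submission
  imports Defs
begin

text \<open>By Lucas' theorem modulo 2, \<open>n choose k\<close> is odd iff every binary digit of \<open>k\<close> is at
  most the corresponding digit of \<open>n\<close>. For even \<open>n\<close> the coefficients with odd \<open>k\<close> are therefore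
  even, so in characteristic 2 the form phi_odd n vanishes. Row \<open>n\<close> contains \<open>2 ^ s(n)\<close> odd
  coefficients, symmetric under \<open>k \<mapsto> n - k\<close>; as there is at most one middle coefficient and
  \<open>2 ^ s(n)\<close> is even, exactly half of them have \<open>2k < n\<close>. Finally, the nondegenerate part of a
  diagonal form is the diagonal form of its nonzero entries, and in characteristic 2 the nonzero
  entries of phi_even n are all 1.\<close>

lemma odd_choose_iff_half:
  "odd (n choose k) \<longleftrightarrow> odd (n div 2 choose k div 2) \<and> (odd k \<longrightarrow> odd n)"
proof (induction n arbitrary: k)
  case 0
  then show ?case by (cases k) auto
next
  case (Suc n)
  show ?case
  proof (cases k)
    case 0
    then show ?thesis by simp
  next
    case (Suc j)
    have pascal: "odd (Suc n choose k) \<longleftrightarrow> odd (n choose j) \<noteq> odd (n choose Suc j)"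
      using Suc by simp
    obtain a e where n: "n = 2 * a + e" "e < 2" by (intro that[of "n div 2" "n mod 2"]) auto
    obtain b f where j: "j = 2 * b + f" "f < 2" by (intro that[of "j div 2" "j mod 2"]) auto
    have "e = 0 \<or> e = 1" "f = 0 \<or> f = 1" using n j by auto
    then show ?thesis
      unfolding pascal Suc.IH[of j] Suc.IH[of "Suc j"] using n j Suc
      by (elim disjE) simp_all
  qed
qed

lemma odd_choose_imp_le: "odd (n choose k) \<Longrightarrow> k \<le> n"
  by (metis odd_pos zero_less_binomial_iff)

lemma odd_choose_imp_even: "even n \<Longrightarrow> odd (n choose k) \<Longrightarrow> even k"
  by (simp add: odd_choose_iff_half[of n k])

(* the defining equation of bitcount is unconditional and would unfold forever under simp *)
declare bitcount.simps [simp del]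

lemma bitcount_0 [simp]: "bitcount 0 = 0"
  by (subst bitcount.simps) simp

lemma bitcount_rec: "n > 0 \<Longrightarrow> bitcount n = n mod 2 + bitcount (n div 2)"
  by (subst bitcount.simps) simp

lemma bitcount_pos: "n > 0 \<Longrightarrow> bitcount n > 0"
proof (induction n rule: bitcount.induct)
  case (1 n)
  then show ?case
    using bitcount_rec[of n] by (cases "even n") (auto elim: evenE simp: odd_iff_mod_2_eq_one)
qed

lemma finite_odd_choose: "finite {k. odd (n choose k)}"
  by (rule finite_subset[of _ "{..n}"]) (auto dest: odd_choose_imp_le)

lemma odd_choose_div_mod_bij:
  "bij_betw (\<lambda>k. (k div 2, k mod 2)) {k. odd (n choose k)}
     ({j. odd (n div 2 choose j)} \<times> {..n mod 2})"
  by (rule bij_betw_byWitness[where f' = "\<lambda>(j, e). 2 * j + e"])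
     (auto simp: odd_choose_iff_half[of n] elim: oddE)

lemma card_odd_choose: "card {k. odd (n choose k)} = 2 ^ bitcount n"
proof (induction n rule: bitcount.induct)
  case (1 n)
  show ?case
  proof (cases "n = 0")
    case True
    then have "{k. odd (n choose k)} = {0}" by (auto dest: odd_choose_imp_le)
    then show ?thesis using True by simp
  next
    case False
    have "card {k. odd (n choose k)} = card {j. odd (n div 2 choose j)} * card {..n mod 2}"
      unfolding bij_betw_same_card[OF odd_choose_div_mod_bij[of n]] by (rule card_cartesian_product)
    also have "card {..n mod 2} = 2 ^ (n mod 2)"
      by (cases "even n") (simp_all add: odd_iff_mod_2_eq_one)
    also have "card {j. odd (n div 2 choose j)} * 2 ^ (n mod 2) = 2 ^ bitcount n"
      using "1" False by (simp add: bitcount_rec[of n] power_add)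
    finally show ?thesis .
  qed
qed

lemma card_odd_choose_lower_half:
  assumes "n > 0"
  shows "card {k. 2 * k < n \<and> odd (n choose k)} = 2 ^ (bitcount n - 1)"
proof -
  define A where "A = {k. 2 * k < n \<and> odd (n choose k)}"
  define M where "M = {k. 2 * k = n \<and> odd (n choose k)}"
  have upper_half: "{k. n < 2 * k \<and> odd (n choose k)} = (\<lambda>k. n - k) ` A"
  proof (intro equalityI subsetI)
    fix k
    assume k: "k \<in> {k. n < 2 * k \<and> odd (n choose k)}"
    then have "k \<le> n" by (auto dest: odd_choose_imp_le)
    then have "k = n - (n - k)" "n - k \<in> A"
      using k binomial_symmetric[of k n] by (auto simp: A_def)
    then show "k \<in> (\<lambda>k. n - k) ` A" by blast
  next
    fix k
    assume "k \<in> (\<lambda>k. n - k) ` A"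
    then obtain i where "i \<in> A" "k = n - i" by blast
    then show "k \<in> {k. n < 2 * k \<and> odd (n choose k)}"
      using binomial_symmetric[of i n] by (auto simp: A_def)
  qed
  have "{k. odd (n choose k)} = A \<union> (\<lambda>k. n - k) ` A \<union> M"
    unfolding upper_half[symmetric] unfolding A_def M_def by auto
  moreover have "card ((\<lambda>k. n - k) ` A) = card A"
    by (rule card_image) (auto simp: inj_on_def A_def)
  moreover have "finite A" "finite M"
    using finite_odd_choose[of n] by (auto simp: A_def M_def elim: finite_subset)
  moreover have M_le_1: "card M \<le> 1"
  proof -
    have "M \<subseteq> {n div 2}" by (auto simp: M_def)
    then show ?thesis using card_mono[of "{n div 2}" M] by simp
  qed
  moreover have "A \<inter> (\<lambda>k. n - k) ` A = {}" "(A \<union> (\<lambda>k. n - k) ` A) \<inter> M = {}"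
    unfolding upper_half[symmetric] unfolding A_def M_def by auto
  ultimately have "2 ^ bitcount n = 2 * card A + card M"
    by (simp add: card_odd_choose[of n, symmetric] card_Un_disjoint)
  moreover have "2 ^ bitcount n = 2 * (2::nat) ^ (bitcount n - 1)"
    using bitcount_pos[OF assms] by (simp add: power_eq_if)
  ultimately show ?thesis
    using M_le_1 unfolding A_def by presburger
qed

lemma diag_form_eq_0: "set a \<subseteq> {0} \<Longrightarrow> diag_form a x y = 0"
  unfolding diag_form_def by (intro sum.neutral) (auto dest: nth_mem)

lemma diag_form_unit_right:
  "i < length a \<Longrightarrow> diag_form a x (\<lambda>k. if k = i then 1 else 0) = x i * a ! i"
  by (simp add: diag_form_def if_distrib cong: if_cong)

lemma radical_diag_form:
  fixes a :: "'a::field list"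
  shows "radical (diag_form a) (kvec (length a)) =
     {x \<in> kvec (length a). \<forall>i < length a. a ! i \<noteq> 0 \<longrightarrow> x i = 0}"
proof (intro equalityI subsetI)
  fix x
  assume x: "x \<in> radical (diag_form a) (kvec (length a))"
  have "x i = 0" if "i < length a" "a ! i \<noteq> 0" for i
  proof -
    have "(\<lambda>k. if k = i then 1 else 0) \<in> kvec (length a)"
      using that by (simp add: kvec_def)
    then have "diag_form a x (\<lambda>k. if k = i then 1 else 0) = 0"
      using x unfolding radical_def by blast
    then have "x i * a ! i = 0"
      by (simp only: diag_form_unit_right[OF that(1)])
    then show ?thesis using that(2) by simp
  qed
  then show "x \<in> {x \<in> kvec (length a). \<forall>i < length a. a ! i \<noteq> 0 \<longrightarrow> x i = 0}"
    using x by (simp add: radical_def)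
next
  fix x :: "nat \<Rightarrow> 'a"
  assume "x \<in> {x \<in> kvec (length a). \<forall>i < length a. a ! i \<noteq> 0 \<longrightarrow> x i = 0}"
  then show "x \<in> radical (diag_form a) (kvec (length a))"
    by (auto simp: radical_def diag_form_def intro!: sum.neutral)
qed

definition subvec :: "nat list \<Rightarrow> (nat \<Rightarrow> 'a::zero) \<Rightarrow> nat \<Rightarrow> 'a" where
  "subvec L x j = (if j < length L then x (L ! j) else 0)"

lemma subvec_eq_0_iff: "subvec L x = (\<lambda>_. 0) \<longleftrightarrow> (\<forall>i \<in> set L. x i = 0)"
  by (auto simp: subvec_def fun_eq_iff in_set_conv_nth dest: nth_mem)

lemma subvec_image_kvec:
  assumes L: "distinct L" "set L \<subseteq> {..<m}"
  shows "subvec L ` kvec m = kvec (length L)"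
proof (intro equalityI subsetI)
  fix z :: "nat \<Rightarrow> 'a"
  assume z: "z \<in> kvec (length L)"
  have inj: "inj_on ((!) L) {..<length L}"
    using L by (simp add: inj_on_nth)
  define x where "x i = (if i \<in> set L then z (the_inv_into {..<length L} ((!) L) i) else 0)" for i
  have "x \<in> kvec m"
    using L by (auto simp: kvec_def x_def)
  moreover have "subvec L x = z"
    using z by (auto simp: fun_eq_iff subvec_def x_def kvec_def the_inv_into_f_f[OF inj])
  ultimately show "z \<in> subvec L ` kvec m" by blast
qed (auto simp: kvec_def subvec_def)

lemma diag_form_subvec:
  assumes L: "distinct L" "set L = {i. i < length a \<and> a ! i \<noteq> 0}"
  shows "diag_form a x y = diag_form (map ((!) a) L) (subvec L x) (subvec L y)"
proof -
  have "diag_form a x y = (\<Sum>i \<in> set L. x i * a ! i * y i)"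
    unfolding diag_form_def using L(2) by (intro sum.mono_neutral_right) auto
  also have "\<dots> = (\<Sum>j < length L. x (L ! j) * a ! (L ! j) * y (L ! j))"
    by (rule sum.reindex_bij_betw[OF bij_betw_nth[OF L(1) refl refl], symmetric])
  also have "\<dots> = diag_form (map ((!) a) L) (subvec L x) (subvec L y)"
    by (simp add: diag_form_def subvec_def)
  finally show ?thesis .
qed

theorem nondeg_part_iso_diag_form_nonzero:
  fixes a :: "'k::field list"
  shows "nondeg_part_iso (length a) (diag_form a)
           (length (filter (\<lambda>c. c \<noteq> 0) a)) (diag_form (filter (\<lambda>c. c \<noteq> 0) a))"
proof -
  define L where "L = filter (\<lambda>i. a ! i \<noteq> 0) [0..<length a]"
  have L: "distinct L" "set L = {i. i < length a \<and> a ! i \<noteq> 0}"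
    by (auto simp: L_def)
  have nonzero: "filter (\<lambda>c. c \<noteq> 0) a = map ((!) a) L"
    unfolding L_def by (subst map_nth[symmetric]) (simp add: filter_map comp_def)
  have "{x \<in> kvec (length a). subvec L x = (\<lambda>_. 0)} = radical (diag_form a) (kvec (length a))"
    unfolding radical_diag_form subvec_eq_0_iff L(2) by blast
  moreover have "subvec L ` kvec (length a) = kvec (length L)"
    using L by (intro subvec_image_kvec) auto
  ultimately show ?thesis
    unfolding nondeg_part_iso_def nonzero length_map
    by (intro exI[of _ "subvec L"])
       (auto simp: subvec_def fun_eq_iff diag_form_subvec[OF L])
qed

lemma of_nat_CHAR_2:
  assumes "CHAR('a::semiring_1) = 2"
  shows "of_nat c = (if even c then 0 else (1::'a))"
proof -
  have two: "of_nat 2 = (0::'a)"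
    by (metis assms of_nat_CHAR)
  have "of_nat c = (of_nat (2 * (c div 2) + c mod 2) :: 'a)"
    by simp
  also have "\<dots> = of_nat (c mod 2)"
    by (simp only: of_nat_add of_nat_mult two) simp
  finally show ?thesis by (simp add: mod2_eq_if)
qed

lemma filter_nonzero_map_of_nat_CHAR_2:
  assumes "CHAR('a::semiring_1) = 2"
  shows "filter (\<lambda>c. c \<noteq> 0) (map (\<lambda>i. of_nat (f i) :: 'a) xs) =
           replicate (length (filter (\<lambda>i. odd (f i)) xs)) 1"
proof -
  have "(1::'a) \<noteq> 0"
    using of_nat_CHAR_2[OF assms, of 1] by auto
  then show ?thesis
    by (induction xs) (auto simp: of_nat_CHAR_2[OF assms])
qed

lemma phi_odd_CHAR_2:
  assumes "CHAR('k::field) = 2" "even n"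
  shows "set (phi_odd n :: 'k list) \<subseteq> {0}"
  using assms by (auto simp: phi_odd_def of_nat_CHAR_2 dest: odd_choose_imp_even)

lemma filter_nonzero_phi_even_CHAR_2:
  assumes "CHAR('k::field) = 2" "n > 0" "even n"
  shows "filter (\<lambda>c. c \<noteq> 0) (phi_even n :: 'k list) = replicate (2 ^ (bitcount n - 1)) 1"
proof -
  have "length (filter (\<lambda>i. odd (n choose i)) (filter (\<lambda>i. even i \<and> 2 * i < n) [0..<n])) =
        card {k. 2 * k < n \<and> odd (n choose k)}"
    unfolding filter_filter length_filter_conv_card
    using \<open>even n\<close> by (intro arg_cong[where f = card]) (auto dest: odd_choose_imp_even)
  then show ?thesis
    unfolding phi_even_def filter_nonzero_map_of_nat_CHAR_2[OF assms(1)]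
    by (simp add: card_odd_choose_lower_half[OF \<open>n > 0\<close>])
qed

theorem theoremB:
  fixes n :: nat
  assumes char2: "CHAR('k::field) = 2"
    and npos: "n > 0" and neven: "even n"
  shows "(\<forall>x\<in>kvec (length (phi_odd n :: 'k list)). \<forall>y\<in>kvec (length (phi_odd n :: 'k list)).
            diag_form (phi_odd n :: 'k list) x y = 0)
       \<and> nondeg_part_iso (length (phi_even n :: 'k list)) (diag_form (phi_even n :: 'k list))
            (2 ^ (bitcount n - 1)) (diag_form (replicate (2 ^ (bitcount n - 1)) (1::'k)))"
  using diag_form_eq_0[OF phi_odd_CHAR_2[OF char2 neven]]
    nondeg_part_iso_diag_form_nonzero[of "phi_even n :: 'k list"]
  unfolding filter_nonzero_phi_even_CHAR_2[OF char2 npos neven] length_replicate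
  by blast

end
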